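(* Let $I$ be a set, $\mathcal{E}=(E_i)_{i\in I}$ a family of nonempty sets, and $R$ a multiple relation in $\mathcal{E}$. Then the set $\mathcal{K}_R$ of subsets of $J_R$ that are not scindable for $R$ is an integral connective structure on $J_R$.
   Context: For $J\subseteq I$ let $Z_J=\prod_{j\in J}E_j$ ($J$-families; $Z_\emptyset=\{\bullet\}$). A multiple relation is a pair $R=(J_R,G_R)$ with $J_R\subseteq I$ and $G_R\subseteq Z_{J_R}$. For $K\subseteq J_R$, $R_{|K}=(K,\{x_{|K}:x\in G_R\})$. Product: $R\bowtie S=(J_R\cup J_S,\{x\in Z_{J_R\cup J_S}: x_{|J_R}\in G_R,\ x_{|J_S}\in G_S\})$. A bipartition of $J$ is a pair $(K,L)$ of nonempty disjoint subsets with union $J$. A relation $T$ is scindable if for some bipartition $(K,L)$ of $J_T$ there are relations $R,S$ with domains $K,L$ and $T=R\bowtie S$; a subset $J\subseteq J_R$ is scindable for $R$ if $R_{|J}$ is scindable. A connective structure on $X$ is a set $\mathcal{K}$ of subsets of $X$ such that for every $\mathcal{I}\subseteq\mathcal{K}$ with $\bigcap_{K\in\mathcal{I}}K\neq\emptyset$, $\bigcup_{K\in\mathcal{I}}K\in\mathcal{K}$; it is integral if it contains all singletons. *)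

theory Defs
  imports "HOL-Library.FuncSet"
begin

text \<open>J-families: Z_J = product of E_j over j in J, as extensional functions
  (Z_{} is the singleton containing the everywhere-undefined function).\<close>
definition families :: "('i \<Rightarrow> 'e set) \<Rightarrow> 'i set \<Rightarrow> ('i \<Rightarrow> 'e) set" where
  "families E J = PiE J E"

type_synonym ('i, 'e) mrel = "'i set \<times> ('i \<Rightarrow> 'e) set"

definition is_mrel :: "'i set \<Rightarrow> ('i \<Rightarrow> 'e set) \<Rightarrow> ('i, 'e) mrel \<Rightarrow> bool" where
  "is_mrel I E R \<longleftrightarrow> fst R \<subseteq> I \<and> snd R \<subseteq> families E (fst R)"

definition mrestrict :: "('i, 'e) mrel \<Rightarrow> 'i set \<Rightarrow> ('i, 'e) mrel" where
  "mrestrict R K = (K, (\<lambda>x. restrict x K) ` snd R)"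

definition mprod :: "('i \<Rightarrow> 'e set) \<Rightarrow> ('i, 'e) mrel \<Rightarrow> ('i, 'e) mrel \<Rightarrow> ('i, 'e) mrel" where
  "mprod E R S = (fst R \<union> fst S,
     {x \<in> families E (fst R \<union> fst S). restrict x (fst R) \<in> snd R \<and> restrict x (fst S) \<in> snd S})"

definition bipartition :: "'i set \<Rightarrow> 'i set \<Rightarrow> 'i set \<Rightarrow> bool" where
  "bipartition J K L \<longleftrightarrow> K \<noteq> {} \<and> L \<noteq> {} \<and> K \<inter> L = {} \<and> K \<union> L = J"

definition scindable :: "'i set \<Rightarrow> ('i \<Rightarrow> 'e set) \<Rightarrow> ('i, 'e) mrel \<Rightarrow> bool" where
  "scindable I E T \<longleftrightarrow> (\<exists>K L R S. bipartition (fst T) K L \<and>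
      is_mrel I E R \<and> is_mrel I E S \<and> fst R = K \<and> fst S = L \<and> T = mprod E R S)"

definition scindable_subset :: "'i set \<Rightarrow> ('i \<Rightarrow> 'e set) \<Rightarrow> ('i, 'e) mrel \<Rightarrow> 'i set \<Rightarrow> bool" where
  "scindable_subset I E R J \<longleftrightarrow> scindable I E (mrestrict R J)"

definition connective_structure :: "'a set \<Rightarrow> 'a set set \<Rightarrow> bool" where
  "connective_structure X \<K> \<longleftrightarrow> \<K> \<subseteq> Pow X \<and>
     (\<forall>\<I>. \<I> \<subseteq> \<K> \<and> \<Inter>\<I> \<noteq> {} \<longrightarrow> \<Union>\<I> \<in> \<K>)"

definition integral_connective_structure :: "'a set \<Rightarrow> 'a set set \<Rightarrow> bool" where
  "integral_connective_structure X \<K> \<longleftrightarrow> connective_structure X \<K> \<and> (\<forall>x\<in>X. {x} \<in> \<K>)"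

end

theory Submission
  imports Defs
begin

text \<open>Singletons admit no bipartition. If the union U of non-scindable sets with a common
  point a split as R|U = A \<bowtie> B along a bipartition (K, L), then, since a lies in every member
  and K, L are both nonempty, some member J meets both K and L. A splitting of a relation
  restricts to any subset: R|J = R|(J \<inter> K) \<bowtie> R|(J \<inter> L), because a family whose
  (J \<inter> K)- and (J \<inter> L)-parts come from two elements of A \<bowtie> B is the J-part of the element
  glued from their K- and L-parts. This contradicts the non-scindability of J.\<close>

lemma mrestrict_mrestrict:
  assumes "J \<subseteq> U"
  shows "mrestrict (mrestrict R U) J = mrestrict R J"
proof -
  from assms have "U \<inter> J = J" by blast
  then show ?thesis by (simp add: mrestrict_def image_image)
qed

lemma is_mrel_mrestrict:
  assumes "is_mrel I E R" and "J \<subseteq> fst R"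
  shows "is_mrel I E (mrestrict R J)"
  using assms by (fastforce simp: is_mrel_def mrestrict_def families_def PiE_iff)

lemma not_bipartition_singleton: "\<not> bipartition {x} K L"
  unfolding bipartition_def by (metis Int_absorb1 Un_upper1 Un_upper2 subset_singletonD)

lemma bipartition_Union_meets_both:
  assumes a: "\<And>J. J \<in> \<I> \<Longrightarrow> a \<in> J" and bp: "bipartition (\<Union>\<I>) K L"
  obtains J where "J \<in> \<I>" "J \<inter> K \<noteq> {}" "J \<inter> L \<noteq> {}"
proof -
  from bp have KL: "K \<noteq> {}" "L \<noteq> {}" "K \<inter> L = {}" "K \<union> L = \<Union>\<I>"
    by (auto simp: bipartition_def)
  then obtain b where b: "b \<in> K \<union> L" "a \<in> K \<longleftrightarrow> b \<in> L"
    by blast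
  with KL obtain J where J: "J \<in> \<I>" "b \<in> J" by blast
  with a have "a \<in> K \<union> L" using KL by blast
  with J a b KL have "J \<inter> K \<noteq> {} \<and> J \<inter> L \<noteq> {}" by blast
  with J that show thesis by blast
qed

lemma mrestrict_mprod_split:
  assumes disj: "fst A \<inter> fst B = {}" and J: "J \<subseteq> fst A \<union> fst B"
  shows "mrestrict (mprod E A B) J =
    mprod E (mrestrict (mprod E A B) (J \<inter> fst A)) (mrestrict (mprod E A B) (J \<inter> fst B))"
    (is "mrestrict ?T J = _")
proof -
  let ?K = "fst A" and ?L = "fst B"
  have G: "snd ?T = {x \<in> PiE (?K \<union> ?L) E. restrict x ?K \<in> snd A \<and> restrict x ?L \<in> snd B}"
    by (simp add: mprod_def families_def)
  have "(\<lambda>x. restrict x J) ` snd ?T =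
    {y \<in> PiE J E. restrict y (J \<inter> ?K) \<in> (\<lambda>x. restrict x (J \<inter> ?K)) ` snd ?T
        \<and> restrict y (J \<inter> ?L) \<in> (\<lambda>x. restrict x (J \<inter> ?L)) ` snd ?T}" (is "?l = ?r")
  proof
    show "?l \<subseteq> ?r"
    proof
      fix y assume "y \<in> ?l"
      then obtain x where x: "x \<in> snd ?T" "y = restrict x J" by auto
      with G J have "y \<in> PiE J E" by (auto simp: PiE_iff)
      moreover have "restrict y (J \<inter> ?K) = restrict x (J \<inter> ?K)"
        and "restrict y (J \<inter> ?L) = restrict x (J \<inter> ?L)"
        using x(2) by (auto simp: Int_absorb1)
      ultimately show "y \<in> ?r" using x(1) by auto
    qed
  next
    show "?r \<subseteq> ?l"
    proof
      fix y assume "y \<in> ?r"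
      then obtain x1 x2 where y: "y \<in> PiE J E" and x: "x1 \<in> snd ?T" "x2 \<in> snd ?T"
        and yK: "restrict y (J \<inter> ?K) = restrict x1 (J \<inter> ?K)"
        and yL: "restrict y (J \<inter> ?L) = restrict x2 (J \<inter> ?L)" by auto
      define z where "z = restrict (\<lambda>i. if i \<in> ?K then x1 i else x2 i) (?K \<union> ?L)"
      have "restrict z ?K = restrict x1 ?K" and "restrict z ?L = restrict x2 ?L"
        using disj by (auto simp: z_def fun_eq_iff)
      moreover have "z \<in> PiE (?K \<union> ?L) E"
        using x G by (auto simp: z_def PiE_iff)
      ultimately have "z \<in> snd ?T" using x G by auto
      moreover have "restrict z J = y"
      proof
        fix i show "restrict z J i = y i"
          using y J fun_cong[OF yK, of i] fun_cong[OF yL, of i]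
          by (cases "i \<in> J") (auto simp: z_def PiE_iff extensional_def)
      qed
      ultimately show "y \<in> ?l" by (metis image_eqI)
    qed
  qed
  moreover have "(J \<inter> ?K) \<union> (J \<inter> ?L) = J" using J by blast
  ultimately show ?thesis
    by (simp add: mprod_def mrestrict_def families_def)
qed

lemma scindable_mrestrict_mprod:
  assumes T: "is_mrel I E (mprod E A B)" and bp: "bipartition (fst A \<union> fst B) (fst A) (fst B)"
    and J: "J \<subseteq> fst A \<union> fst B" "J \<inter> fst A \<noteq> {}" "J \<inter> fst B \<noteq> {}"
  shows "scindable I E (mrestrict (mprod E A B) J)"
proof -
  let ?T = "mprod E A B"
  have "fst ?T = fst A \<union> fst B" by (simp add: mprod_def)
  with T J have "is_mrel I E (mrestrict ?T (J \<inter> fst A))" "is_mrel I E (mrestrict ?T (J \<inter> fst B))"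
    by (auto intro: is_mrel_mrestrict)
  moreover have "bipartition J (J \<inter> fst A) (J \<inter> fst B)"
    using bp J by (auto simp: bipartition_def)
  moreover have "mrestrict ?T J = mprod E (mrestrict ?T (J \<inter> fst A)) (mrestrict ?T (J \<inter> fst B))"
    using bp J by (intro mrestrict_mprod_split) (auto simp: bipartition_def)
  ultimately show ?thesis
    unfolding scindable_def by (metis fst_conv mrestrict_def)
qed

theorem mainTheorem2:
  fixes I :: "'i set" and E :: "'i \<Rightarrow> 'e set" and R :: "('i, 'e) mrel"
  assumes "\<forall>i\<in>I. E i \<noteq> {}"
    and "is_mrel I E R"
  shows "integral_connective_structure (fst R)
           {J. J \<subseteq> fst R \<and> \<not> scindable_subset I E R J}"
  unfolding integral_connective_structure_def connective_structure_def
proof (intro conjI allI impI ballI)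
  fix x assume "x \<in> fst R"
  then show "{x} \<in> {J. J \<subseteq> fst R \<and> \<not> scindable_subset I E R J}"
    by (simp add: scindable_subset_def scindable_def mrestrict_def not_bipartition_singleton)
next
  fix \<I> assume \<I>: "\<I> \<subseteq> {J. J \<subseteq> fst R \<and> \<not> scindable_subset I E R J} \<and> \<Inter>\<I> \<noteq> {}"
  then obtain a where a: "\<And>J. J \<in> \<I> \<Longrightarrow> a \<in> J" by auto
  have U: "\<Union>\<I> \<subseteq> fst R" using \<I> by auto
  have "\<not> scindable I E (mrestrict R (\<Union>\<I>))"
  proof
    assume "scindable I E (mrestrict R (\<Union>\<I>))"
    then obtain A B where bp: "bipartition (\<Union>\<I>) (fst A) (fst B)"
      and eq: "mrestrict R (\<Union>\<I>) = mprod E A B"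
      unfolding scindable_def by (auto simp: mrestrict_def)
    obtain J where J: "J \<in> \<I>" "J \<inter> fst A \<noteq> {}" "J \<inter> fst B \<noteq> {}"
      using bipartition_Union_meets_both[OF a bp] by blast
    have "\<Union>\<I> = fst A \<union> fst B" using bp by (simp add: bipartition_def)
    moreover have "is_mrel I E (mrestrict R (\<Union>\<I>))" using assms(2) U by (rule is_mrel_mrestrict)
    ultimately have "scindable I E (mrestrict (mrestrict R (\<Union>\<I>)) J)"
      using eq bp J by (metis Union_upper scindable_mrestrict_mprod)
    with J(1) \<I> show False by (auto simp: Union_upper mrestrict_mrestrict scindable_subset_def)
  qed
  with U show "\<Union>\<I> \<in> {J. J \<subseteq> fst R \<and> \<not> scindable_subset I E R J}"
    by (simp add: scindable_subset_def)
qed auto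

end
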